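(* Let $H\in\mathbb{R}^{n\times d}$ have rank $h$, $\Sigma\in\mathbb{R}^{n\times n}$ symmetric positive definite, $\Gamma_0$ the empirical covariance of an initial ensemble, $G_0=\Gamma_0$, $\widetilde{\mathbb{M}}_i=(I+G_iH^\top\Sigma^{-1}H)^{-1}$, $G_{i+1}=\widetilde{\mathbb{M}}_iG_i$. With $\widetilde{\mathbb{P}},\widetilde{\mathbb{Q}},\widetilde{\mathbb{N}}$ as in the context, for every $i\ge0$ these are spectral projectors of $\widetilde{\mathbb{M}}_i$: each commutes with $\widetilde{\mathbb{M}}_i$ and is idempotent, their pairwise products are zero, and $\widetilde{\mathbb{P}}+\widetilde{\mathbb{Q}}+\widetilde{\mathbb{N}}=I$.
   Context: $H^+=(H^\top\Sigma^{-1}H)^\dagger H^\top\Sigma^{-1}$. $\Gamma_0=\frac1{J-1}\sum_j(v_0^{(j)}-\bar v_0)(v_0^{(j)}-\bar v_0)^\top$. Let $C_i=HG_iH^\top$, $r$ the number of positive eigenvalues of $(C_0,\Sigma)$, and $\tilde w_1,\dots,\tilde w_n$ a basis of $\mathbb{R}^n$ with $\tilde w_k^\top\Sigma\tilde w_l$ equal to $1$ if $k=l$, $0$ otherwise, each a generalized eigenvector of $(C_i,\Sigma)$ for every $i$ with eigenvalue $\tilde\delta_{\ell,i}$, where $\tilde w_1,\dots,\tilde w_r\in\mathsf{Ran}(\Sigma^{-1}H)$ have positive eigenvalues, $\tilde w_{r+1},\dots,\tilde w_h\in\mathsf{Ran}(\Sigma^{-1}H)$ eigenvalue zero, $\tilde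 w_{h+1},\dots,\tilde w_n\in\mathsf{Ker}(H^\top)$. Let $\tilde u_\ell=\frac1{\tilde\delta_{\ell,0}}G_0H^\top\tilde w_\ell$ ($\ell\le r$), $\tilde u_\ell=H^+\Sigma\tilde w_\ell$ ($r<\ell\le h$), $\widetilde U=[\tilde u_1,\dots,\tilde u_h]$, $\widetilde U_{k:l}$ its columns $k$ through $l$. $\widetilde{\mathbb{P}}=\widetilde U_{1:r}\widetilde U_{1:r}^\top H^\top\Sigma^{-1}H$, $\widetilde{\mathbb{Q}}=\widetilde U_{r+1:h}\widetilde U_{r+1:h}^\top H^\top\Sigma^{-1}H$, $\widetilde{\mathbb{N}}=I-\widetilde{\mathbb{P}}-\widetilde{\mathbb{Q}}$. *)

theory Defs
  imports "HOL-Analysis.Analysis"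
begin

definition outer :: "real^'m \<Rightarrow> real^'k \<Rightarrow> real^'k^'m" where
  "outer u v = (\<chi> i j. u $ i * v $ j)"

definition pinv :: "real^'n^'m \<Rightarrow> real^'m^'n" where
  "pinv A = (THE X. A ** X ** A = A \<and> X ** A ** X = X \<and>
                    transpose (A ** X) = A ** X \<and> transpose (X ** A) = X ** A)"

definition spd :: "real^'n^'n \<Rightarrow> bool" where
  "spd S \<longleftrightarrow> transpose S = S \<and> (\<forall>x. x \<noteq> 0 \<longrightarrow> x \<bullet> (S *v x) > 0)"

definition ens_mean :: "nat \<Rightarrow> (nat \<Rightarrow> real^'d) \<Rightarrow> real^'d" where
  "ens_mean J v = (1 / real J) *\<^sub>R (\<Sum>j<J. v j)"

definition emp_cov :: "nat \<Rightarrow> (nat \<Rightarrow> real^'d) \<Rightarrow> real^'d^'d" where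
  "emp_cov J v = (1 / (real J - 1)) *\<^sub>R
     (\<Sum>j<J. outer (v j - ens_mean J v) (v j - ens_mean J v))"

definition Mmat :: "real^'d^'n \<Rightarrow> real^'n^'n \<Rightarrow> real^'d^'d \<Rightarrow> real^'d^'d" where
  "Mmat H S G = matrix_inv (mat 1 + G ** transpose H ** matrix_inv S ** H)"

primrec Gseq :: "real^'d^'n \<Rightarrow> real^'n^'n \<Rightarrow> real^'d^'d \<Rightarrow> nat \<Rightarrow> real^'d^'d" where
  "Gseq H S G0 0 = G0"
| "Gseq H S G0 (Suc i) = Mmat H S (Gseq H S G0 i) ** Gseq H S G0 i"

end

(*
  The normal matrix A = H^T Sigma^-1 H and every G_i are symmetric positive semidefinite,
  so each I + G_i A is invertible and M_i is defined.  The vectors u_l satisfy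
  A u_l = H^T w_l, hence they are biorthogonal to the H^T w_k, and the matrices
  sum_(l in I) u_l u_l^T A are oblique projections with P_I P_J = P_(I inter J).
  G_0 maps each H^T w_l to a multiple of u_l (to zero when the eigenvalue vanishes,
  because a vanishing quadratic form of a semidefinite matrix forces G_0 H^T w_l = 0),
  and the update G_(i+1) = (I + G_i A)^-1 G_i preserves this.  So P_I commutes with
  G_i A, hence with I + G_i A and with its inverse M_i.
*)
theory Submission
  imports Defs
begin

declare transpose_matrix_vector [simp del]

lemma invertible_iff_ker:
  fixes A :: "'a::field^'n^'n"
  shows "invertible A \<longleftrightarrow> (\<forall>x. A *v x = 0 \<longrightarrow> x = 0)"
  by (simp add: invertible_left_inverse matrix_left_invertible_ker)

lemma
  fixes A :: "'a::field^'n^'n"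
  assumes "invertible A"
  shows matrix_inv_right: "A ** matrix_inv A = mat 1"
    and matrix_inv_left: "matrix_inv A ** A = mat 1"
  using someI_ex[OF assms[unfolded invertible_def]] by (simp_all add: matrix_inv_def)

lemma matrix_add_rdistrib: "((A::'a::semiring_1^'n^'m) + B) ** C = A ** C + B ** C"
  by (vector matrix_matrix_mult_def sum.distrib[symmetric] field_simps)

lemma matrix_diff_rdistrib: "((A::'a::ring_1^'n^'m) - B) ** C = A ** C - B ** C"
  by (vector matrix_matrix_mult_def sum_subtractf[symmetric] field_simps)

lemma matrix_diff_ldistrib: "(C::'a::ring_1^'m^'p) ** (A - B) = C ** A - C ** B"
  by (vector matrix_matrix_mult_def sum_subtractf[symmetric] field_simps)

lemma transpose_add: "transpose (A + B) = transpose A + transpose (B::'a::plus^'n^'m)"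
  by (simp add: transpose_def vec_eq_iff)

lemma transpose_diff: "transpose (A - B) = transpose A - transpose (B::'a::minus^'n^'m)"
  by (simp add: transpose_def vec_eq_iff)

lemma transpose_sum: "transpose (\<Sum>l\<in>I. M l) = (\<Sum>l\<in>I. transpose (M l::'a::comm_monoid_add^'n^'m))"
  by (simp add: transpose_def vec_eq_iff)

lemma transpose_outer: "transpose (outer u v) = outer v u"
  by (simp add: transpose_def outer_def vec_eq_iff)

lemma outer_mult_vec: "outer u v *v y = (v \<bullet> y) *\<^sub>R (u::real^'m)"
  by (simp add: vec_eq_iff outer_def matrix_vector_mult_def inner_vec_def sum_distrib_left mult_ac)

lemma sum_matrix_vector_mult: "(\<Sum>l\<in>I. M l) *v y = (\<Sum>l\<in>I. M l *v (y::'a::comm_semiring_1^'n))"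
proof (cases "finite I")
  case True
  then show ?thesis
    by (induction I rule: finite_induct) (auto simp: matrix_vector_mult_add_rdistrib)
qed (simp add: matrix_vector_mult_def vec_eq_iff)

lemma matrix_vector_mult_sum: "A *v (\<Sum>l\<in>I. f l) = (\<Sum>l\<in>I. A *v (f l::real^'n))"
  by (simp add: linear_sum[OF matrix_vector_mul_linear] o_def)

lemma inner_matrix_vector_mult: "(x::real^'m) \<bullet> (A *v y) = (transpose A *v x) \<bullet> y"
  by (simp add: dot_lmul_matrix[symmetric] transpose_matrix_vector)

lemma inner_matrix_vector_mult_symmetric:
  "transpose G = G \<Longrightarrow> (x::real^'n) \<bullet> (G *v y) = (G *v x) \<bullet> y"
  by (metis inner_matrix_vector_mult)

lemma matrix_inv_commute:
  fixes K P :: "'a::field^'n^'n"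
  assumes "invertible K" "P ** K = K ** P"
  shows "P ** matrix_inv K = matrix_inv K ** P"
proof -
  have "P ** matrix_inv K = matrix_inv K ** (K ** P) ** matrix_inv K"
    by (metis assms(1) matrix_inv_left matrix_mul_assoc matrix_mul_lid)
  also have "\<dots> = matrix_inv K ** P"
    by (metis assms matrix_inv_right matrix_mul_assoc matrix_mul_rid)
  finally show ?thesis .
qed

section \<open>Moore-Penrose inverse of a symmetric matrix\<close>

definition is_pinv :: "real^'n^'m \<Rightarrow> real^'m^'n \<Rightarrow> bool" where
  "is_pinv A X \<longleftrightarrow> A ** X ** A = A \<and> X ** A ** X = X \<and>
                    transpose (A ** X) = A ** X \<and> transpose (X ** A) = X ** A"

lemma pinv_eq_The: "pinv A = (THE X. is_pinv A X)"
  by (simp add: pinv_def is_pinv_def)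

lemma is_pinv_unique:
  assumes X: "is_pinv A X" and Y: "is_pinv A Y"
  shows "X = Y"
proof -
  have "A ** X = transpose (A ** X)"
    using X by (simp add: is_pinv_def)
  also have "\<dots> = transpose (A ** Y ** A ** X)"
    using Y by (simp add: is_pinv_def)
  also have "\<dots> = transpose (A ** X) ** transpose (A ** Y)"
    by (simp add: matrix_transpose_mul matrix_mul_assoc)
  also have "\<dots> = A ** Y"
    using X Y by (simp add: is_pinv_def matrix_mul_assoc)
  finally have AX: "A ** X = A ** Y" .
  have "X ** A = transpose (X ** A)"
    using X by (simp add: is_pinv_def)
  also have "\<dots> = transpose (X ** A ** Y ** A)"
    using Y unfolding is_pinv_def by (metis matrix_mul_assoc)
  also have "\<dots> = transpose (Y ** A) ** transpose (X ** A)"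
    by (simp add: matrix_transpose_mul matrix_mul_assoc)
  also have "\<dots> = Y ** A"
    using X Y by (simp add: is_pinv_def) (metis matrix_mul_assoc)
  finally have XA: "X ** A = Y ** A" .
  have "X = X ** A ** X"
    using X by (simp add: is_pinv_def)
  also have "\<dots> = Y ** A ** Y"
    using AX XA by (metis matrix_mul_assoc)
  also have "\<dots> = Y"
    using Y by (simp add: is_pinv_def)
  finally show ?thesis .
qed

lemma pinv_eqI: "is_pinv A X \<Longrightarrow> pinv A = X"
  unfolding pinv_eq_The by (blast intro: is_pinv_unique)

lemma kernel_projection_exists:
  fixes A :: "real^'n^'m"
  obtains P :: "real^'n^'n"
  where "transpose P = P" "P ** P = P" "A ** P = 0" "\<And>x. A *v x = 0 \<Longrightarrow> P *v x = x"
proof -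
  have "subspace {x. A *v x = 0}"
    by (auto simp: subspace_def algebra_simps)
  then obtain B where B_ker: "B \<subseteq> {x. A *v x = 0}" and B_orth: "pairwise orthogonal B"
    and B_unit: "\<And>b. b \<in> B \<Longrightarrow> norm b = 1" and "independent B"
    and B_span: "span B = {x. A *v x = 0}"
    by (metis orthonormal_basis_subspace)
  then have "finite B"
    using independent_imp_finite by blast
  have B_inner: "b \<bullet> b' = (if b' = b then 1 else 0)" if "b \<in> B" "b' \<in> B" for b b'
    using B_orth B_unit[OF that(1)] that unfolding pairwise_def orthogonal_def
    by (auto simp: norm_eq_1)
  define P where "P = (\<Sum>b\<in>B. outer b b)"
  have P_mult: "P *v x = (\<Sum>b\<in>B. (b \<bullet> x) *\<^sub>R b)" for x
    by (simp add: P_def sum_matrix_vector_mult outer_mult_vec)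
  have P_fixes_B: "P *v b = b" if "b \<in> B" for b
    using \<open>finite B\<close> that
    by (simp add: P_mult B_inner if_distrib[of "\<lambda>c. c *\<^sub>R _"] cong: if_cong)
  have P_fixes_ker: "{x. A *v x = 0} \<subseteq> {x. P *v x = x}"
    unfolding B_span[symmetric]
    by (rule span_minimal) (auto simp: P_fixes_B subspace_def algebra_simps)
  have A_P: "A *v (P *v x) = 0" for x
    using B_ker by (auto simp: P_mult matrix_vector_mult_sum matrix_vector_mult_scaleR intro!: sum.neutral)
  then have "P ** P = P" "A ** P = 0"
    using P_fixes_ker by (auto simp: matrix_eq matrix_vector_mul_assoc[symmetric])
  moreover have "transpose P = P"
    by (simp add: P_def transpose_sum transpose_outer)
  ultimately show ?thesis
    using that P_fixes_ker by blast
qed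

lemma is_pinv_pinv_symmetric:
  fixes A :: "real^'n^'n"
  assumes A_sym: "transpose A = A"
  shows "is_pinv A (pinv A)"
proof -
  obtain P :: "real^'n^'n" where P_sym: "transpose P = P" and "P ** P = P" "A ** P = 0"
    and P_ker: "\<And>x. A *v x = 0 \<Longrightarrow> P *v x = x"
    using kernel_projection_exists[of A] by blast
  moreover have "P ** A = 0"
    using \<open>A ** P = 0\<close> by (metis A_sym P_sym matrix_transpose_mul transpose_iff transpose_mat mat_0)
  ultimately have P_B: "P ** (A + P) = P" and B_P: "(A + P) ** P = P"
    by (simp_all add: matrix_add_ldistrib matrix_add_rdistrib)
  have "invertible (A + P)"
    unfolding invertible_iff_ker
  proof (intro allI impI)
    fix x assume "(A + P) *v x = 0"
    moreover from this have "P *v x = 0"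
      using P_B by (metis matrix_vector_mul_assoc matrix_vector_mult_0_right)
    ultimately show "x = 0"
      using P_ker by (simp add: matrix_vector_mult_add_rdistrib)
  qed
  define X where "X = matrix_inv (A + P) - P"
  have P_X: "P ** matrix_inv (A + P) = P"
    using P_B \<open>invertible (A + P)\<close> by (metis matrix_inv_right matrix_mul_assoc matrix_mul_rid)
  have X_P: "matrix_inv (A + P) ** P = P"
    using B_P \<open>invertible (A + P)\<close> by (metis matrix_inv_left matrix_mul_assoc matrix_mul_lid)
  have "A ** X = ((A + P) - P) ** matrix_inv (A + P)"
    by (simp add: X_def matrix_diff_ldistrib \<open>A ** P = 0\<close>)
  also have "\<dots> = mat 1 - P"
    by (simp only: matrix_diff_rdistrib matrix_inv_right[OF \<open>invertible (A + P)\<close>] P_X)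
  finally have A_X: "A ** X = mat 1 - P" .
  have "X ** A = matrix_inv (A + P) ** ((A + P) - P)"
    by (simp add: X_def matrix_diff_rdistrib \<open>P ** A = 0\<close>)
  also have "\<dots> = mat 1 - P"
    by (simp only: matrix_diff_ldistrib matrix_inv_left[OF \<open>invertible (A + P)\<close>] X_P)
  finally have "X ** A = mat 1 - P" .
  then have "is_pinv A X"
    using A_X \<open>P ** A = 0\<close> \<open>P ** P = P\<close> P_X P_sym
    by (simp add: is_pinv_def matrix_diff_rdistrib transpose_diff X_def matrix_diff_ldistrib)
  then show ?thesis
    by (simp add: pinv_eqI)
qed

section \<open>Positive semidefinite matrices\<close>

definition psd :: "real^'n^'n \<Rightarrow> bool" where
  "psd G \<longleftrightarrow> transpose G = G \<and> (\<forall>x. 0 \<le> x \<bullet> (G *v x))"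

lemma quadratic_nonneg_imp_linear_coeff_zero:
  fixes c s :: real
  assumes c: "0 \<le> c" and nonneg: "\<And>t. 0 \<le> t\<^sup>2 * c - 2 * t * s"
  shows "s = 0"
proof -
  define t where "t = s / (c + 1)"
  have s_eq: "s = (c + 1) * t"
    using c by (simp add: t_def)
  have "(c + 1)\<^sup>2 * (t\<^sup>2 * c - 2 * t * s) = - (s\<^sup>2 * (c + 2))"
    unfolding s_eq by algebra
  moreover have "0 \<le> (c + 1)\<^sup>2 * (t\<^sup>2 * c - 2 * t * s)"
    using nonneg by simp
  ultimately have "s\<^sup>2 * (c + 2) \<le> 0"
    by linarith
  then show "s = 0"
    using c by (simp add: mult_le_0_iff)
qed

lemma psd_kernel:
  assumes "psd G" "x \<bullet> (G *v x) = 0"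
  shows "G *v x = 0"
proof -
  define y where "y = G *v x"
  have G_sym: "transpose G = G"
    using assms(1) by (simp add: psd_def)
  have "0 \<le> (x - t *\<^sub>R y) \<bullet> (G *v (x - t *\<^sub>R y))" for t
    using assms(1) by (simp add: psd_def)
  moreover have "(x - t *\<^sub>R y) \<bullet> (G *v (x - t *\<^sub>R y)) = t\<^sup>2 * (y \<bullet> (G *v y)) - 2 * t * (y \<bullet> y)" for t
    using assms(2) inner_matrix_vector_mult_symmetric[OF G_sym, of x y]
    by (simp add: y_def algebra_simps power2_eq_square inner_commute)
  ultimately have "y \<bullet> y = 0"
    using assms(1) quadratic_nonneg_imp_linear_coeff_zero[of "y \<bullet> (G *v y)" "y \<bullet> y"]
    by (simp add: psd_def)
  then show ?thesis
    by (simp add: y_def)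
qed

lemma spd_imp_psd: "spd S \<Longrightarrow> psd S"
  unfolding spd_def psd_def by (metis inner_zero_left less_eq_real_def)

lemma spd_invertible:
  assumes "spd S"
  shows "invertible S"
  unfolding invertible_iff_ker using assms by (metis spd_def inner_zero_right less_irrefl)

lemma spd_matrix_inv:
  assumes "spd S"
  shows "spd (matrix_inv S)"
proof -
  have S_sym: "transpose S = S"
    using assms by (simp add: spd_def)
  note S_inv = matrix_inv_left[OF spd_invertible[OF assms]] matrix_inv_right[OF spd_invertible[OF assms]]
  have "transpose (matrix_inv S) ** S = mat 1"
    using S_inv(2) by (metis S_sym matrix_transpose_mul transpose_mat)
  then have "transpose (matrix_inv S) = matrix_inv S"
    by (metis S_inv(2) matrix_mul_assoc matrix_mul_lid matrix_mul_rid)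
  moreover have "0 < x \<bullet> (matrix_inv S *v x)" if "x \<noteq> 0" for x
  proof -
    define y where "y = matrix_inv S *v x"
    have x_eq: "x = S *v y"
      by (simp add: y_def matrix_vector_mul_assoc S_inv(2))
    then have "y \<noteq> 0"
      using that by auto
    then have "0 < y \<bullet> (S *v y)"
      using assms by (simp add: spd_def)
    moreover have "x \<bullet> (matrix_inv S *v x) = y \<bullet> (S *v y)"
      by (simp only: y_def[symmetric]) (simp add: x_eq inner_commute)
    ultimately show ?thesis
      by simp
  qed
  ultimately show ?thesis
    by (simp add: spd_def)
qed

lemma quadratic_form_congruence:
  "x \<bullet> ((transpose H ** B ** H) *v x) = (H *v x) \<bullet> (B *v (H *v (x::real^'n)))"
  by (simp add: matrix_vector_mul_assoc[symmetric] inner_matrix_vector_mult[of x "transpose H"])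

lemma psd_congruence:
  assumes "psd B"
  shows "psd (transpose H ** B ** H)"
  using assms by (simp add: psd_def quadratic_form_congruence matrix_transpose_mul matrix_mul_assoc)

lemma congruence_kernel:
  assumes "spd B" "(transpose H ** B ** H) *v x = 0"
  shows "H *v x = 0"
  using assms quadratic_form_congruence[of x H B] unfolding spd_def
  by (metis inner_zero_right less_irrefl)

lemma psd_normal_matrix: "spd S \<Longrightarrow> psd (transpose H ** matrix_inv S ** H)"
  by (simp add: psd_congruence spd_imp_psd spd_matrix_inv)

text \<open>No lower bound on J is needed: for J = 1 the factor 1 / (J - 1) is 1 / 0 = 0.\<close>

lemma psd_emp_cov: "psd (emp_cov J v)"
proof -
  have "emp_cov J v *v y = (1 / (real J - 1)) *\<^sub>R
      (\<Sum>j<J. ((v j - ens_mean J v) \<bullet> y) *\<^sub>R (v j - ens_mean J v))" for y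
    by (simp add: emp_cov_def scaleR_matrix_vector_assoc[symmetric] sum_matrix_vector_mult outer_mult_vec)
  then have "y \<bullet> (emp_cov J v *v y) = (\<Sum>j<J. ((v j - ens_mean J v) \<bullet> y)\<^sup>2) / (real J - 1)" for y
    by (simp add: inner_sum_right power2_eq_square inner_commute)
  moreover have "0 \<le> (\<Sum>j<J. ((v j - ens_mean J v) \<bullet> y)\<^sup>2) / (real J - 1)" for y
    by (cases "J = 0") (auto intro!: divide_nonneg_nonneg sum_nonneg)
  moreover have "transpose (emp_cov J v) = emp_cov J v"
    by (simp add: emp_cov_def transpose_scalar transpose_sum transpose_outer)
  ultimately show ?thesis
    unfolding psd_def by simp
qed

lemma normal_equation:
  assumes "spd S" "H *v u = S *v w"
  shows "(transpose H ** matrix_inv S ** H) *v u = transpose H *v w"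
proof -
  have "matrix_inv S *v (S *v w) = w"
    using assms(1) by (simp add: matrix_vector_mul_assoc matrix_inv_left spd_invertible)
  then show ?thesis
    by (simp add: matrix_vector_mul_assoc[symmetric] assms(2))
qed

lemma weighted_pinv_solves_consistent:
  assumes S: "spd S" and w: "w \<in> range (\<lambda>x. (matrix_inv S ** H) *v x)"
  defines "A \<equiv> transpose H ** matrix_inv S ** H"
  shows "H *v ((pinv A ** transpose H ** matrix_inv S) *v (S *v w)) = S *v w"
proof -
  obtain x where x: "w = matrix_inv S *v (H *v x)"
    using w by (auto simp: matrix_vector_mul_assoc)
  then have Sw: "S *v w = H *v x"
    using S by (metis matrix_vector_mul_assoc matrix_inv_right spd_invertible matrix_vector_mul_lid)
  have "transpose A = A"
    using psd_normal_matrix[OF S, of H] unfolding A_def psd_def by blast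
  then have "A ** (pinv A ** A) = A"
    using is_pinv_pinv_symmetric unfolding is_pinv_def by (metis matrix_mul_assoc)
  then have "A *v (pinv A *v (A *v x) - x) = 0"
    by (simp add: matrix_vector_mult_diff_distrib matrix_vector_mul_assoc)
  then have "H *v (pinv A *v (A *v x) - x) = 0"
    using congruence_kernel[OF spd_matrix_inv[OF S]] by (simp add: A_def)
  then show ?thesis
    by (simp add: Sw A_def matrix_vector_mult_diff_distrib matrix_vector_mul_assoc[symmetric])
qed

section \<open>The covariance update\<close>

lemma invertible_update:
  assumes G: "psd G" and A: "psd A"
  shows "invertible (mat 1 + G ** A)"
  unfolding invertible_iff_ker
proof (intro allI impI)
  fix x assume "(mat 1 + G ** A) *v x = 0"
  then have x_eq: "x = - (G *v (A *v x))"
    by (simp add: matrix_vector_mult_add_rdistrib matrix_vector_mul_assoc[symmetric] eq_neg_iff_add_eq_0)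
  then have "x \<bullet> (A *v x) = - ((A *v x) \<bullet> (G *v (A *v x)))"
    by (metis inner_commute inner_minus_left)
  moreover have "0 \<le> (A *v x) \<bullet> (G *v (A *v x))" "0 \<le> x \<bullet> (A *v x)"
    using G A by (simp_all add: psd_def)
  ultimately have "A *v x = 0"
    using A by (intro psd_kernel) simp_all
  then show "x = 0"
    using x_eq by simp
qed

lemma psd_update:
  assumes G: "psd G" and A: "psd A"
  shows "psd (matrix_inv (mat 1 + G ** A) ** G)"
proof -
  define K where "K = mat 1 + G ** A"
  define M where "M = matrix_inv K"
  have K_M: "K ** M = mat 1" and M_K: "M ** K = mat 1"
    using invertible_update[OF assms] by (simp_all add: K_def M_def matrix_inv_left matrix_inv_right)
  have G_sym: "transpose G = G" and A_sym: "transpose A = A"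
    using G A by (simp_all add: psd_def)
  have "K ** G = G ** transpose K"
    by (simp add: K_def transpose_add matrix_transpose_mul G_sym A_sym matrix_add_rdistrib
        matrix_add_ldistrib matrix_mul_assoc)
  then have "G = M ** G ** transpose K"
    by (metis M_K matrix_mul_assoc matrix_mul_lid)
  then have "G ** transpose M = M ** G ** transpose (M ** K)"
    by (metis matrix_mul_assoc matrix_transpose_mul)
  then have MG_sym: "transpose (M ** G) = M ** G"
    by (simp add: M_K matrix_transpose_mul G_sym)
  have "0 \<le> y \<bullet> ((M ** G) *v y)" for y
  proof -
    define z where "z = (M ** G) *v y"
    have "K *v z = G *v y"
      by (simp add: z_def matrix_vector_mul_assoc matrix_mul_assoc K_M)
    then have z_eq: "z = G *v (y - A *v z)"
      by (simp add: K_def matrix_vector_mul_assoc[symmetric] algebra_simps)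
    have "y \<bullet> z = (y - A *v z) \<bullet> z + z \<bullet> (A *v z)"
      by (simp add: inner_diff_left inner_diff_right inner_commute)
    also have "\<dots> = (y - A *v z) \<bullet> (G *v (y - A *v z)) + z \<bullet> (A *v z)"
      by (subst (1) z_eq) simp
    finally show ?thesis
      using G A by (simp add: psd_def z_def[symmetric])
  qed
  then show ?thesis
    using MG_sym by (simp add: psd_def M_def K_def)
qed

lemma update_eigenvector:
  assumes G: "psd G" and A: "psd A" and u: "G *v (A *v u) = c *\<^sub>R u"
  shows "(matrix_inv (mat 1 + G ** A) ** G) *v (A *v u) = (c / (1 + c)) *\<^sub>R u"
proof -
  define M where "M = matrix_inv (mat 1 + G ** A)"
  have "(1 + c) *\<^sub>R (M *v u) = M *v ((mat 1 + G ** A) *v u)"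
    using u by (simp add: matrix_vector_mult_add_rdistrib matrix_vector_mul_assoc[symmetric]
        scaleR_add_left matrix_vector_mult_scaleR matrix_vector_right_distrib)
  also have "\<dots> = u"
    using invertible_update[OF G A] by (simp add: M_def matrix_vector_mul_assoc matrix_inv_left)
  finally have Mu: "(1 + c) *\<^sub>R (M *v u) = u" .
  show ?thesis
  proof (cases "c = -1")
    case True
    then show ?thesis
      using Mu u by (simp add: M_def matrix_vector_mul_assoc[symmetric])
  next
    case False
    then have "M *v u = (1 / (1 + c)) *\<^sub>R u"
      using Mu by (metis add_eq_0_iff eq_vector_fraction_iff scaleR_one)
    then show ?thesis
      using u by (simp add: M_def matrix_vector_mul_assoc[symmetric] matrix_vector_mult_scaleR)
  qed
qed

lemma update_inverse_commute:
  fixes P G A :: "'a::field^'n^'n"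
  assumes "P ** (G ** A) = (G ** A) ** P" "invertible (mat 1 + G ** A)"
  shows "P ** matrix_inv (mat 1 + G ** A) = matrix_inv (mat 1 + G ** A) ** P"
  using assms(2) by (rule matrix_inv_commute) (simp add: assms(1) matrix_add_ldistrib matrix_add_rdistrib)

lemma Mmat_eq: "Mmat H S G = matrix_inv (mat 1 + G ** (transpose H ** matrix_inv S ** H))"
  by (simp add: Mmat_def matrix_mul_assoc)

lemma psd_Gseq:
  assumes "spd S" "psd G\<^sub>0"
  shows "psd (Gseq H S G\<^sub>0 i)"
  by (induction i) (simp_all add: assms Mmat_eq psd_update psd_normal_matrix)

lemma Gseq_eigenvector:
  assumes "spd S" "psd G\<^sub>0" "G\<^sub>0 *v ((transpose H ** matrix_inv S ** H) *v u) = c *\<^sub>R u"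
  shows "\<exists>c. Gseq H S G\<^sub>0 i *v ((transpose H ** matrix_inv S ** H) *v u) = c *\<^sub>R u"
proof (induction i)
  case 0
  then show ?case
    using assms(3) by auto
next
  case (Suc i)
  then obtain c where "Gseq H S G\<^sub>0 i *v ((transpose H ** matrix_inv S ** H) *v u) = c *\<^sub>R u"
    by blast
  then show ?case
    using update_eigenvector[OF psd_Gseq[OF assms(1,2), of H i] psd_normal_matrix[OF assms(1), of H]]
    by (auto simp: Mmat_eq)
qed

section \<open>Oblique projections\<close>

definition oblique_proj :: "real^'d^'d \<Rightarrow> (nat \<Rightarrow> real^'d) \<Rightarrow> nat set \<Rightarrow> real^'d^'d" where
  "oblique_proj A u I = (\<Sum>l\<in>I. outer (u l) (u l)) ** A"

lemma oblique_proj_mult_vec: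
  assumes "transpose A = A"
  shows "oblique_proj A u I *v x = (\<Sum>l\<in>I. ((A *v u l) \<bullet> x) *\<^sub>R u l)"
  by (simp add: oblique_proj_def matrix_vector_mul_assoc[symmetric] sum_matrix_vector_mult
      outer_mult_vec inner_matrix_vector_mult_symmetric[OF assms])

lemma oblique_proj_mult:
  assumes A_sym: "transpose A = A" and "finite I" "finite I'"
    and biorth: "\<And>k l. k \<in> I \<Longrightarrow> l \<in> I' \<Longrightarrow> (A *v u k) \<bullet> u l = (if k = l then 1 else 0)"
  shows "oblique_proj A u I ** oblique_proj A u I' = oblique_proj A u (I \<inter> I')"
proof -
  have "oblique_proj A u I *v (oblique_proj A u I' *v x) = oblique_proj A u (I \<inter> I') *v x" for x
  proof -
    have "oblique_proj A u I *v (oblique_proj A u I' *v x)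
        = (\<Sum>k\<in>I. (\<Sum>l\<in>I'. ((A *v u l) \<bullet> x) * ((A *v u k) \<bullet> u l)) *\<^sub>R u k)"
      by (simp add: oblique_proj_mult_vec[OF A_sym] inner_sum_right)
    also have "\<dots> = (\<Sum>k\<in>I. (if k \<in> I' then (A *v u k) \<bullet> x else 0) *\<^sub>R u k)"
      using \<open>finite I'\<close> by (intro sum.cong refl) (simp add: biorth if_distrib cong: if_cong)
    also have "\<dots> = oblique_proj A u (I \<inter> I') *v x"
      using \<open>finite I\<close>
      by (simp add: oblique_proj_mult_vec[OF A_sym] sum.inter_restrict if_distrib[of "\<lambda>c. c *\<^sub>R _"]
          cong: if_cong)
    finally show ?thesis .
  qed
  then show ?thesis
    by (simp add: matrix_eq matrix_vector_mul_assoc)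
qed

lemma oblique_proj_idempotent:
  assumes "transpose A = A" "finite I"
    and "\<And>k l. k \<in> I \<Longrightarrow> l \<in> I \<Longrightarrow> (A *v u k) \<bullet> u l = (if k = l then 1 else 0)"
  shows "oblique_proj A u I ** oblique_proj A u I = oblique_proj A u I"
  using oblique_proj_mult[OF assms(1,2,2,3)] by simp

lemma oblique_proj_disjoint:
  assumes "transpose A = A" "finite I" "finite I'" "I \<inter> I' = {}"
    and "\<And>k l. k \<in> I \<Longrightarrow> l \<in> I' \<Longrightarrow> (A *v u k) \<bullet> u l = 0"
  shows "oblique_proj A u I ** oblique_proj A u I' = 0"
proof -
  have "(A *v u k) \<bullet> u l = (if k = l then 1 else 0)" if "k \<in> I" "l \<in> I'" for k l
    using assms(4,5) that by auto
  then show ?thesis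
    using oblique_proj_mult[OF assms(1-3)] assms(4) by (simp add: oblique_proj_def)
qed

lemma oblique_proj_commute:
  assumes A_sym: "transpose A = A" and G_sym: "transpose G = G"
    and eig: "\<And>l. l \<in> I \<Longrightarrow> \<exists>c. G *v (A *v u l) = c *\<^sub>R u l"
  shows "oblique_proj A u I ** (G ** A) = (G ** A) ** oblique_proj A u I"
proof -
  obtain c where c: "\<And>l. l \<in> I \<Longrightarrow> G *v (A *v u l) = c l *\<^sub>R u l"
    using eig by metis
  have "oblique_proj A u I *v (G *v (A *v x)) = G *v (A *v (oblique_proj A u I *v x))" for x
  proof -
    have "oblique_proj A u I *v (G *v (A *v x)) = (\<Sum>l\<in>I. (c l * ((A *v u l) \<bullet> x)) *\<^sub>R u l)"
      unfolding oblique_proj_mult_vec[OF A_sym]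
      by (intro sum.cong refl) (simp add: inner_matrix_vector_mult_symmetric[OF G_sym, of "A *v u _"]
          inner_matrix_vector_mult_symmetric[OF A_sym, of "u _"] c)
    also have "\<dots> = G *v (A *v (oblique_proj A u I *v x))"
      unfolding oblique_proj_mult_vec[OF A_sym]
      by (simp add: matrix_vector_mult_sum matrix_vector_mult_scaleR c mult.commute cong: sum.cong)
    finally show ?thesis .
  qed
  then show ?thesis
    by (simp add: matrix_eq matrix_vector_mul_assoc matrix_mul_assoc)
qed

lemma oblique_proj_commute_Mmat:
  fixes H :: "real^'d^'n" and S :: "real^'n^'n"
  defines "A \<equiv> transpose H ** matrix_inv S ** H"
  assumes S: "spd S" and G\<^sub>0: "psd G\<^sub>0" and eig: "\<And>l. l \<in> I \<Longrightarrow> \<exists>c. G\<^sub>0 *v (A *v u l) = c *\<^sub>R u l"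
  shows "oblique_proj A u I ** Mmat H S (Gseq H S G\<^sub>0 i) = Mmat H S (Gseq H S G\<^sub>0 i) ** oblique_proj A u I"
proof -
  let ?G = "Gseq H S G\<^sub>0 i"
  have "psd A" "psd ?G"
    using S G\<^sub>0 by (simp_all add: A_def psd_normal_matrix psd_Gseq)
  moreover have "\<exists>c. ?G *v (A *v u l) = c *\<^sub>R u l" if "l \<in> I" for l
    using eig[OF that] Gseq_eigenvector[OF S G\<^sub>0] by (auto simp: A_def)
  ultimately have "oblique_proj A u I ** (?G ** A) = (?G ** A) ** oblique_proj A u I"
    by (intro oblique_proj_commute) (auto simp: psd_def)
  then show ?thesis
    using invertible_update[OF \<open>psd ?G\<close> \<open>psd A\<close>] by (simp add: Mmat_eq A_def update_inverse_commute)
qed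

lemma complementary_projections:
  fixes P Q M :: "'a::ring_1^'n^'n"
  assumes "P ** P = P" "Q ** Q = Q" "P ** Q = 0" "Q ** P = 0"
    and "P ** M = M ** P" "Q ** M = M ** Q"
  defines "N \<equiv> mat 1 - P - Q"
  shows "N ** M = M ** N" "N ** N = N" "P ** N = 0" "N ** P = 0" "Q ** N = 0" "N ** Q = 0"
    and "P + Q + N = mat 1"
  using assms by (simp_all add: matrix_diff_ldistrib matrix_diff_rdistrib)

lemma spectral_basis_vector:
  fixes H :: "real^'d^'n" and S :: "real^'n^'n" and G :: "real^'d^'d"
    and w :: "nat \<Rightarrow> real^'n" and \<delta> :: "nat \<Rightarrow> real" and r l :: nat
  defines "A \<equiv> transpose H ** matrix_inv S ** H"
  defines "u \<equiv> \<lambda>l. if l < r then (1 / \<delta> l) *\<^sub>R ((G ** transpose H) *v w l)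
                  else (pinv A ** transpose H ** matrix_inv S) *v (S *v w l)"
  assumes S: "spd S" and G: "psd G"
    and eig: "(H ** G ** transpose H) *v w l = \<delta> l *\<^sub>R (S *v w l)"
    and ran: "w l \<in> range (\<lambda>x. (matrix_inv S ** H) *v x)"
    and pos: "l < r \<Longrightarrow> \<delta> l \<noteq> 0" and zero: "r \<le> l \<Longrightarrow> \<delta> l = 0"
  shows "H *v u l = S *v w l" "\<exists>c. G *v (A *v u l) = c *\<^sub>R u l"
proof -
  have "H *v u l = S *v w l \<and> (\<exists>c. G *v (transpose H *v w l) = c *\<^sub>R u l)"
  proof (cases "l < r")
    case True
    then have "G *v (transpose H *v w l) = \<delta> l *\<^sub>R u l"
      using pos by (simp add: u_def matrix_vector_mul_assoc)
    moreover have "H *v u l = S *v w l"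
      using True pos eig by (simp add: u_def matrix_vector_mult_scaleR matrix_vector_mul_assoc matrix_mul_assoc)
    ultimately show ?thesis
      by blast
  next
    case False
    have "(transpose H *v w l) \<bullet> (G *v (transpose H *v w l)) = w l \<bullet> ((H ** G ** transpose H) *v w l)"
      by (simp add: inner_matrix_vector_mult[of "w l" H] matrix_vector_mul_assoc[symmetric])
    then have "G *v (transpose H *v w l) = 0 *\<^sub>R u l"
      using psd_kernel[OF G] eig zero False by simp
    moreover have "H *v u l = S *v w l"
      using False weighted_pinv_solves_consistent[OF S ran] by (simp add: u_def A_def)
    ultimately show ?thesis
      by blast
  qed
  then have Hu: "H *v u l = S *v w l" and "\<exists>c. G *v (transpose H *v w l) = c *\<^sub>R u l"
    by blast+
  moreover have "A *v u l = transpose H *v w l"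
    using normal_equation[OF S Hu] by (simp add: A_def)
  ultimately show "H *v u l = S *v w l" "\<exists>c. G *v (A *v u l) = c *\<^sub>R u l"
    by simp_all
qed

theorem proposition4p10:
  fixes H :: "real^'d^'n" and Sig :: "real^'n^'n"
    and J :: nat and v :: "nat \<Rightarrow> real^'d"
    and w :: "nat \<Rightarrow> real^'n" and \<delta> :: "nat \<Rightarrow> nat \<Rightarrow> real"
    and h r :: nat
  defines "G \<equiv> Gseq H Sig (emp_cov J v)"
  defines "C \<equiv> (\<lambda>i. H ** G i ** transpose H)"
  defines "Hp \<equiv> pinv (transpose H ** matrix_inv Sig ** H) ** transpose H ** matrix_inv Sig"
  defines "u \<equiv> (\<lambda>l. if l < r then (1 / \<delta> l 0) *\<^sub>R ((G 0 ** transpose H) *v w l)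
                     else Hp *v (Sig *v w l))"
  defines "A \<equiv> transpose H ** matrix_inv Sig ** H"
  defines "P \<equiv> (\<Sum>l<r. outer (u l) (u l)) ** A"
  defines "Q \<equiv> (\<Sum>l\<in>{r..<h}. outer (u l) (u l)) ** A"
  defines "N \<equiv> mat 1 - P - Q"
  assumes rankH: "rank H = h"
    and Sig_spd: "spd Sig"
    and J2: "J \<ge> 2"
    and orth: "\<And>k l. k < CARD('n) \<Longrightarrow> l < CARD('n) \<Longrightarrow>
                 w k \<bullet> (Sig *v w l) = (if k = l then 1 else 0)"
    and eig: "\<And>i l. l < CARD('n) \<Longrightarrow> C i *v w l = \<delta> l i *\<^sub>R (Sig *v w l)"
    and r_le_h: "r \<le> h" and h_le_n: "h \<le> CARD('n)"
    and ran: "\<And>l. l < h \<Longrightarrow> w l \<in> range (\<lambda>x. (matrix_inv Sig ** H) *v x)"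
    and pos: "\<And>l. l < r \<Longrightarrow> \<delta> l 0 > 0"
    and zero: "\<And>l. r \<le> l \<Longrightarrow> l < h \<Longrightarrow> \<delta> l 0 = 0"
    and ker: "\<And>l. h \<le> l \<Longrightarrow> l < CARD('n) \<Longrightarrow> transpose H *v w l = 0"
    and r_def: "r = card {l. l < CARD('n) \<and> \<delta> l 0 > 0}"
  shows "\<forall>i. let M = Mmat H Sig (G i) in
           P ** M = M ** P \<and> Q ** M = M ** Q \<and> N ** M = M ** N \<and>
           P ** P = P \<and> Q ** Q = Q \<and> N ** N = N \<and>
           P ** Q = 0 \<and> Q ** P = 0 \<and> P ** N = 0 \<and> N ** P = 0 \<and>
           Q ** N = 0 \<and> N ** Q = 0 \<and>
           P + Q + N = mat 1"
proof -
  have A_sym: "transpose A = A"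
    using psd_normal_matrix[OF Sig_spd, of H] unfolding A_def psd_def by blast
  have G0_psd: "psd (G 0)"
    by (simp add: G_def psd_emp_cov)
  have basis: "H *v u l = Sig *v w l" "\<exists>c. G 0 *v (A *v u l) = c *\<^sub>R u l" if "l < h" for l
  proof -
    have "(H ** G 0 ** transpose H) *v w l = \<delta> l 0 *\<^sub>R (Sig *v w l)"
      using eig[of l 0] that h_le_n by (simp add: C_def)
    moreover have "\<delta> l 0 \<noteq> 0" if "l < r"
      using pos[OF that] by simp
    ultimately show "H *v u l = Sig *v w l" "\<exists>c. G 0 *v (A *v u l) = c *\<^sub>R u l"
      using spectral_basis_vector[where H = H and S = Sig and G = "G 0" and \<delta> = "\<lambda>l. \<delta> l 0" and r = r
          and w = w and l = l, OF Sig_spd G0_psd _ ran[OF that]] zero[OF _ that]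
      unfolding u_def Hp_def A_def by blast+
  qed
  have biorth: "(A *v u k) \<bullet> u l = (if k = l then 1 else 0)" if "k < h" "l < h" for k l
    using normal_equation[OF Sig_spd basis(1)[OF that(1)]] basis(1)[OF that(2)] orth[of k l] that h_le_n
    by (simp add: A_def inner_matrix_vector_mult[of "w k" H, symmetric])
  have PQ_def: "P = oblique_proj A u {..<r}" "Q = oblique_proj A u {r..<h}"
    by (simp_all add: P_def Q_def oblique_proj_def)
  have proj: "P ** P = P" "Q ** Q = Q" "P ** Q = 0" "Q ** P = 0"
    unfolding PQ_def using A_sym biorth r_le_h
    by (auto intro!: oblique_proj_idempotent oblique_proj_disjoint)
  have M_commute: "P ** Mmat H Sig (G i) = Mmat H Sig (G i) ** P"
    "Q ** Mmat H Sig (G i) = Mmat H Sig (G i) ** Q" for i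
    unfolding PQ_def G_def A_def using basis(2) r_le_h
    by (auto simp: G_def A_def intro!: oblique_proj_commute_Mmat[OF Sig_spd psd_emp_cov])
  show ?thesis
    using proj M_commute complementary_projections[OF proj M_commute] unfolding Let_def N_def by blast
qed

end
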